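(* Let $C_p,C_m>0$ and $T_p,T_m\in(0,1)$ with $T_p\ne T_m$, and let $P(k)=C_pT_p^k-C_mT_m^k$ for real $k$. Then $P$ has exactly one point of abscissa intersection $k^{(0)}$, exactly one extremum $k^{(1)}$ and exactly one inflection point $k^{(2)}$, and $k^{(0)}<k^{(1)}<k^{(2)}$. If $T_p>T_m$ (high pair function), the extremum is a maximum, $P$ is monotonically increasing to the left of its maximum and monotonically decreasing to the right of it, $P$ is concave to the left of its inflection point and convex to the right of it, $P(k)>0$ for $k>k^{(0)}$ and $P(k)<0$ for $k<k^{(0)}$, $P(k)\to 0$ from above as $k\to\infty$, and $P(k)\to-\infty$ as $k\to-\infty$. If $T_p<T_m$ (low pair function), the extremum is a minimum, $P$ is monotonically decreasing to the left of its minimum and monotonically increasing to the right of it, $P$ is convex to the left of its inflection point and concave to the right of it, $P(k)<0$ for $k>k^{(0)}$, $P(k)\to 0$ from below as $k\to\infty$, and $P(k)\to+\infty$ as $k\to-\infty$. Moreover, every derivative $P^{(n)}$, $n\ge 1$, has exactly one zero.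
   Context: A pair function is $P(k)=C_pT_p^k-C_mT_m^k$ with $C_p,C_m>0$ and $T_p,T_m\in(0,1)$. It is a high pair function (HPF) if $T_p>T_m$ and a low pair function (LPF) if $T_p<T_m$. *)

theory Defs
  imports "HOL-Analysis.Analysis"
begin

definition pair_fun :: "real \<Rightarrow> real \<Rightarrow> real \<Rightarrow> real \<Rightarrow> real \<Rightarrow> real" where
  "pair_fun Cp Tp Cm Tm k = Cp * Tp powr k - Cm * Tm powr k"

definition local_max_at :: "(real \<Rightarrow> real) \<Rightarrow> real \<Rightarrow> bool" where
  "local_max_at f x \<longleftrightarrow> (\<exists>e>0. \<forall>y. \<bar>y - x\<bar> < e \<longrightarrow> f y \<le> f x)"

definition local_min_at :: "(real \<Rightarrow> real) \<Rightarrow> real \<Rightarrow> bool" where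
  "local_min_at f x \<longleftrightarrow> (\<exists>e>0. \<forall>y. \<bar>y - x\<bar> < e \<longrightarrow> f x \<le> f y)"

definition local_extremum_at :: "(real \<Rightarrow> real) \<Rightarrow> real \<Rightarrow> bool" where
  "local_extremum_at f x \<longleftrightarrow> local_max_at f x \<or> local_min_at f x"

definition inflection_at :: "(real \<Rightarrow> real) \<Rightarrow> real \<Rightarrow> bool" where
  "inflection_at f x \<longleftrightarrow> (\<exists>e>0.
     (convex_on {x - e..x} f \<and> concave_on {x..x + e} f) \<or>
     (concave_on {x - e..x} f \<and> convex_on {x..x + e} f))"

end

theory Submission
  imports Defs
begin

text \<open>With \<open>a = ln Tp\<close> and \<open>b = ln Tm\<close> the pair function is \<open>P k = Cp e^(a k) - Cm e^(b k)\<close>, whose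
  \<open>n\<close>-th derivative is \<open>Cp a^n e^(a k) - Cm b^n e^(b k) = (-1)^n (e^u - e^v)\<close> with
  \<open>u - v = (a - b) (k - k\<^sub>n)\<close> affine in \<open>k\<close>. Hence every derivative changes sign exactly once, at
  \<open>k\<^sub>n\<close>, and \<open>k\<^sub>n\<close> grows with \<open>n\<close> in steps of \<open>(ln (-b) - ln (-a)) / (a - b) > 0\<close>. The signs of
  \<open>P\<close>, \<open>P'\<close> and \<open>P''\<close> for \<open>b < a\<close> give the shape of a high pair function; a low pair function is
  the negative of the high pair function with the two terms swapped.\<close>

lemma sgn_exp_diff: "sgn (exp u - exp v) = sgn (u - v :: real)"
  by (cases u v rule: linorder_cases) simp_all

lemma strict_mono_on_if_deriv_pos:
  fixes f :: "real \<Rightarrow> real"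
  assumes f': "\<And>x. (f has_real_derivative f' x) (at x)"
    and pos: "\<And>x y z. x \<in> S \<Longrightarrow> y \<in> S \<Longrightarrow> x < z \<Longrightarrow> z < y \<Longrightarrow> 0 < f' z"
  shows "strict_mono_on S f"
proof (rule monotone_onI)
  fix x y assume "x \<in> S" "y \<in> S" "x < y"
  then obtain z where "x < z" "z < y" "f y - f x = (y - x) * f' z" and "0 < f' z"
    using MVT2[OF \<open>x < y\<close>] f' pos by metis
  then show "f x < f y"
    using \<open>x < y\<close> by (smt (verit) mult_pos_pos)
qed

lemma strict_antimono_on_if_deriv_neg:
  fixes f :: "real \<Rightarrow> real"
  assumes f': "\<And>x. (f has_real_derivative f' x) (at x)"
    and neg: "\<And>x y z. x \<in> S \<Longrightarrow> y \<in> S \<Longrightarrow> x < z \<Longrightarrow> z < y \<Longrightarrow> f' z < 0"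
  shows "strict_antimono_on S f"
proof -
  have "strict_mono_on S (\<lambda>x. - f x)"
    using neg by (intro strict_mono_on_if_deriv_pos[where f' = "\<lambda>x. - f' x"] DERIV_minus f') auto
  then show ?thesis
    by (simp add: monotone_on_def)
qed

lemma local_max_at_if_mono_antimono:
  assumes "mono_on {..c} f" "antimono_on {c..} f"
  shows "local_max_at f c"
  unfolding local_max_at_def
proof (intro exI[of _ 1] conjI allI impI)
  fix y :: real
  show "f y \<le> f c"
    using assms by (cases "y \<le> c") (auto simp: monotone_on_def)
qed simp

lemma deriv_eq_0_if_local_extremum_at:
  assumes "(f has_real_derivative l) (at x)" "local_extremum_at f x"
  shows "l = 0"
  using assms(2) unfolding local_extremum_at_def local_max_at_def local_min_at_def
  by (metis DERIV_local_max DERIV_local_min abs_minus_commute assms(1))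

lemma local_max_at_uminus_iff: "local_max_at (\<lambda>x. - f x) x \<longleftrightarrow> local_min_at f x"
  by (simp add: local_max_at_def local_min_at_def)

lemma local_extremum_at_uminus_iff: "local_extremum_at (\<lambda>x. - f x) x \<longleftrightarrow> local_extremum_at f x"
  by (auto simp: local_extremum_at_def local_max_at_def local_min_at_def)

lemma inflection_at_uminus_iff: "inflection_at (\<lambda>x. - f x) x \<longleftrightarrow> inflection_at f x"
  unfolding inflection_at_def concave_on_def by auto

lemma not_convex_on_if_deriv2_neg:
  fixes f :: "real \<Rightarrow> real"
  assumes f': "\<And>x. (f has_real_derivative f' x) (at x)"
    and f'': "\<And>x. (f' has_real_derivative f'' x) (at x)"
    and neg: "\<And>x. x \<in> {u..v} \<Longrightarrow> f'' x < 0"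
    and "u < v"
  shows "\<not> convex_on {u..v} f"
proof
  assume convex: "convex_on {u..v} f"
  define t where "t = (u + v) / 2"
  have t: "u < t" "t < v"
    using \<open>u < v\<close> by (simp_all add: t_def)
  obtain z1 where z1: "u < z1" "z1 < t" "f t - f u = (t - u) * f' z1"
    using MVT2[OF \<open>u < t\<close>] f' by metis
  obtain z2 where z2: "t < z2" "z2 < v" "f v - f t = (v - t) * f' z2"
    using MVT2[OF \<open>t < v\<close>] f' by metis
  have "(f u - f t) / (u - t) \<le> (f t - f v) / (t - v)"
    using convex_on_slope_le[OF convex _ _ t] \<open>u < v\<close>
    by (meson atLeastAtMost_iff order.trans order_refl less_imp_le)
  moreover have "(f u - f t) / (u - t) = f' z1" "(f t - f v) / (t - v) = f' z2"
    using z1(3) z2(3) t by (simp_all add: field_simps)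
  ultimately have "f' z1 \<le> f' z2"
    by simp
  moreover have "f' z2 < f' z1"
    using z1 z2 t neg f'' by (intro DERIV_neg_imp_decreasing[of z1 z2]) (auto intro!: exI)
  ultimately show False
    by simp
qed

text \<open>Near \<open>x\<close> the function is convex on neither side, whereas an inflection point needs
  convexity on one side.\<close>
lemma not_inflection_at_if_deriv2_neg:
  fixes f :: "real \<Rightarrow> real"
  assumes f': "\<And>x. (f has_real_derivative f' x) (at x)"
    and f'': "\<And>x. (f' has_real_derivative f'' x) (at x)"
    and "isCont f'' x" "f'' x < 0"
  shows "\<not> inflection_at f x"
proof
  obtain r where "r > 0" and "\<forall>y. y \<noteq> x \<and> \<bar>x - y\<bar> < r \<longrightarrow> f'' y < 0"
    using LIM_fun_less_zero[where c = x and l = "f'' x"] assms(3,4) unfolding isCont_def by blast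
  with \<open>f'' x < 0\<close> have r: "\<And>y. \<bar>x - y\<bar> < r \<Longrightarrow> f'' y < 0"
    by metis
  assume "inflection_at f x"
  then obtain e where "e > 0" and convex: "convex_on {x - e..x} f \<or> convex_on {x..x + e} f"
    unfolding inflection_at_def by blast
  define d where "d = min e (r / 2)"
  have "0 < d" "d \<le> e" "d < r"
    using \<open>e > 0\<close> \<open>r > 0\<close> by (auto simp: d_def)
  then have "\<not> convex_on {x - d..x} f" "\<not> convex_on {x..x + d} f"
    by (intro not_convex_on_if_deriv2_neg[OF f' f''] r; simp)+
  with \<open>d \<le> e\<close> convex show False
    by (metis convex_on_subset convex_real_interval(5) atLeastatMost_subset_iff order_refl
        add_left_mono diff_left_mono)
qed

lemma not_inflection_at_if_deriv2_nonzero: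
  fixes f :: "real \<Rightarrow> real"
  assumes f': "\<And>x. (f has_real_derivative f' x) (at x)"
    and f'': "\<And>x. (f' has_real_derivative f'' x) (at x)"
    and "isCont f'' x" "f'' x \<noteq> 0"
  shows "\<not> inflection_at f x"
proof (cases "f'' x < 0")
  case True
  then show ?thesis
    using not_inflection_at_if_deriv2_neg[OF f' f''] assms(3) by blast
next
  case False
  then have "\<not> inflection_at (\<lambda>x. - f x) x"
    using assms(3,4) by (intro not_inflection_at_if_deriv2_neg[where f'' = "\<lambda>x. - f'' x"])
      (auto intro: DERIV_minus f' f'' continuous_intros)
  then show ?thesis
    by (simp add: inflection_at_uminus_iff)
qed

lemma tendsto_exp_mult_at_top: "c < 0 \<Longrightarrow> ((\<lambda>k. exp (c * k)) \<longlongrightarrow> 0) at_top"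
  for c :: real
  by (intro filterlim_compose[OF exp_at_bot] filterlim_cmult_at_bot_at_top[OF filterlim_ident]) auto

lemma tendsto_exp_mult_at_bot: "c > 0 \<Longrightarrow> ((\<lambda>k. exp (c * k)) \<longlongrightarrow> 0) at_bot"
  for c :: real
  unfolding filterlim_at_bot_mirror using tendsto_exp_mult_at_top[of "- c"] by simp

lemma filterlim_exp_mult_at_bot:
  fixes c :: real
  assumes "c < 0"
  shows "filterlim (\<lambda>k. exp (c * k)) at_top at_bot"
proof -
  have "filterlim (\<lambda>k. (- c) * k) at_top at_top"
    using assms by (intro filterlim_cmult_at_bot_at_top[OF filterlim_ident]) auto
  then show ?thesis
    unfolding filterlim_at_bot_mirror using filterlim_compose[OF exp_at_top] by simp
qed

locale exp_pair =
  fixes Cp a Cm b :: real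
  assumes Cp_pos: "Cp > 0" and Cm_pos: "Cm > 0"
    and a_neg: "a < 0" and b_neg: "b < 0" and a_neq_b: "a \<noteq> b"
begin

definition nth_deriv :: "nat \<Rightarrow> real \<Rightarrow> real" where
  "nth_deriv n k = Cp * a ^ n * exp (a * k) - Cm * b ^ n * exp (b * k)"

text \<open>Solves \<open>Cp (-a)^n e^(a k) = Cm (-b)^n e^(b k)\<close> for \<open>k\<close>.\<close>
definition nth_deriv_root :: "nat \<Rightarrow> real" where
  "nth_deriv_root n = (ln Cm - ln Cp + real n * (ln (- b) - ln (- a))) / (a - b)"

lemma has_real_derivative_nth_deriv:
  "(nth_deriv n has_real_derivative nth_deriv (Suc n) k) (at k)"
  unfolding nth_deriv_def by (auto intro!: derivative_eq_intros simp: algebra_simps)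

lemma funpow_deriv_nth_deriv: "(deriv ^^ n) (nth_deriv 0) = nth_deriv n"
  by (induction n) (auto intro!: DERIV_imp_deriv has_real_derivative_nth_deriv)

lemma sgn_nth_deriv:
  "sgn (nth_deriv n k) = (-1) ^ n * sgn ((a - b) * (k - nth_deriv_root n))"
proof -
  define u where "u = ln Cp + real n * ln (- a) + a * k"
  define v where "v = ln Cm + real n * ln (- b) + b * k"
  have "exp u = Cp * (- a) ^ n * exp (a * k)" "exp v = Cm * (- b) ^ n * exp (b * k)"
    using Cp_pos Cm_pos a_neg b_neg by (simp_all add: u_def v_def exp_add exp_of_nat_mult)
  moreover have "a ^ n = (-1) ^ n * (- a) ^ n" "b ^ n = (-1) ^ n * (- b) ^ n"
    by (simp_all flip: power_mult_distrib)
  ultimately have "nth_deriv n k = (-1) ^ n * (exp u - exp v)"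
    unfolding nth_deriv_def by (simp add: algebra_simps)
  moreover have "u - v = (a - b) * (k - nth_deriv_root n)"
    using a_neq_b by (simp add: u_def v_def nth_deriv_root_def field_simps)
  ultimately show ?thesis
    by (simp add: sgn_mult sgn_exp_diff)
qed

lemma nth_deriv_eq_0_iff: "nth_deriv n k = 0 \<longleftrightarrow> k = nth_deriv_root n"
  using sgn_nth_deriv[of n k] a_neq_b by (auto simp: sgn_0_0)

lemma nth_deriv_root_less_Suc: "nth_deriv_root n < nth_deriv_root (Suc n)"
proof -
  have "(ln (- b) - ln (- a)) * (a - b) > 0"
    using a_neg b_neg a_neq_b by (cases "a < b") (auto simp: mult_pos_pos mult_neg_neg)
  then have "(ln (- b) - ln (- a)) / (a - b) > 0"
    by (simp add: zero_less_mult_iff zero_less_divide_iff)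
  then show ?thesis
    by (simp add: nth_deriv_root_def diff_divide_distrib add_divide_distrib algebra_simps)
qed

lemma eq_root_1_if_local_extremum_at: "local_extremum_at (nth_deriv 0) k \<Longrightarrow> k = nth_deriv_root 1"
  using deriv_eq_0_if_local_extremum_at[OF has_real_derivative_nth_deriv] nth_deriv_eq_0_iff
  by (metis One_nat_def)

lemma not_inflection_at_nth_deriv_0:
  "k \<noteq> nth_deriv_root 2 \<Longrightarrow> \<not> inflection_at (nth_deriv 0) k"
  by (rule not_inflection_at_if_deriv2_nonzero[OF
        has_real_derivative_nth_deriv has_real_derivative_nth_deriv])
    (auto intro: DERIV_isCont has_real_derivative_nth_deriv simp: nth_deriv_eq_0_iff numeral_2_eq_2)

lemma tendsto_nth_deriv_at_top: "(nth_deriv n \<longlongrightarrow> 0) at_top"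
proof -
  have "((\<lambda>k. Cp * a ^ n * exp (a * k) - Cm * b ^ n * exp (b * k))
          \<longlongrightarrow> Cp * a ^ n * 0 - Cm * b ^ n * 0) at_top"
    by (intro tendsto_intros tendsto_exp_mult_at_top a_neg b_neg)
  then show ?thesis
    by (simp add: nth_deriv_def[abs_def])
qed

end

locale high_exp_pair = exp_pair +
  assumes b_less_a: "b < a"
begin

lemma sgn_alternating_nth_deriv: "sgn ((-1) ^ n * nth_deriv n k) = sgn (k - nth_deriv_root n)"
  using b_less_a by (simp add: sgn_mult sgn_nth_deriv flip: power_mult_distrib)

lemma alternating_nth_deriv_pos_iff: "0 < (-1) ^ n * nth_deriv n k \<longleftrightarrow> nth_deriv_root n < k"
  using sgn_alternating_nth_deriv[of n k] by (metis sgn_1_pos diff_gt_0_iff_gt)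

lemma alternating_nth_deriv_neg_iff: "(-1) ^ n * nth_deriv n k < 0 \<longleftrightarrow> k < nth_deriv_root n"
  using sgn_alternating_nth_deriv[of n k] by (metis sgn_1_neg diff_less_0_iff_less)

lemma strict_mono_on_atMost_root_1: "strict_mono_on {..nth_deriv_root 1} (nth_deriv 0)"
proof (rule strict_mono_on_if_deriv_pos[OF has_real_derivative_nth_deriv])
  fix x y z assume "y \<in> {..nth_deriv_root 1}" "z < y"
  then show "0 < nth_deriv (Suc 0) z"
    using alternating_nth_deriv_neg_iff[of 1 z] by simp
qed

lemma strict_antimono_on_atLeast_root_1: "strict_antimono_on {nth_deriv_root 1..} (nth_deriv 0)"
proof (rule strict_antimono_on_if_deriv_neg[OF has_real_derivative_nth_deriv])
  fix x y z assume "x \<in> {nth_deriv_root 1..}" "x < z"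
  then show "nth_deriv (Suc 0) z < 0"
    using alternating_nth_deriv_pos_iff[of 1 z] by simp
qed

lemma concave_on_atMost_root_2: "concave_on {..nth_deriv_root 2} (nth_deriv 0)"
proof (rule f''_le0_imp_concave[OF _ has_real_derivative_nth_deriv has_real_derivative_nth_deriv])
  fix x assume "x \<in> {..nth_deriv_root 2}"
  then show "nth_deriv (Suc (Suc 0)) x \<le> 0"
    using alternating_nth_deriv_pos_iff[of 2 x] by (simp add: numeral_2_eq_2)
qed simp

lemma convex_on_atLeast_root_2: "convex_on {nth_deriv_root 2..} (nth_deriv 0)"
proof (rule f''_ge0_imp_convex[OF _ has_real_derivative_nth_deriv has_real_derivative_nth_deriv])
  fix x assume "x \<in> {nth_deriv_root 2..}"
  then show "0 \<le> nth_deriv (Suc (Suc 0)) x"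
    using alternating_nth_deriv_neg_iff[of 2 x] by (simp add: numeral_2_eq_2)
qed simp

lemma filterlim_nth_deriv_0_at_bot: "filterlim (nth_deriv 0) at_bot at_bot"
proof -
  have "((\<lambda>k. Cp * exp ((a - b) * k) - Cm) \<longlongrightarrow> Cp * 0 - Cm) at_bot"
    using b_less_a by (intro tendsto_intros tendsto_exp_mult_at_bot) simp
  then have "filterlim (\<lambda>k. (Cp * exp ((a - b) * k) - Cm) * exp (b * k)) at_bot at_bot"
    using Cm_pos filterlim_exp_mult_at_bot[OF b_neg] by (intro filterlim_tendsto_neg_mult_at_bot) auto
  then show ?thesis
    by (simp add: nth_deriv_def[abs_def] algebra_simps flip: exp_add)
qed

end

lemma pair_fun_funpow_deriv_unique_zero:
  assumes "Cp > 0" "Cm > 0" "0 < Tp" "Tp < 1" "0 < Tm" "Tm < 1" "Tp \<noteq> Tm"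
  shows "\<exists>!k. (deriv ^^ n) (pair_fun Cp Tp Cm Tm) k = 0"
proof -
  interpret exp_pair Cp "ln Tp" Cm "ln Tm"
    using assms by unfold_locales auto
  have "pair_fun Cp Tp Cm Tm = nth_deriv 0"
    using assms by (simp add: fun_eq_iff pair_fun_def nth_deriv_def powr_def mult.commute)
  then show ?thesis
    by (simp add: funpow_deriv_nth_deriv nth_deriv_eq_0_iff)
qed

lemma high_pair_fun_shape:
  fixes Cp Cm Tp Tm :: real
  assumes "Cp > 0" "Cm > 0" "0 < Tm" "Tm < Tp" "Tp < 1"
  defines "P \<equiv> pair_fun Cp Tp Cm Tm"
  shows "\<exists>k0 k1 k2.
     {k. P k = 0} = {k0} \<and>
     {k. local_extremum_at P k} = {k1} \<and>
     {k. inflection_at P k} = {k2} \<and>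
     k0 < k1 \<and> k1 < k2 \<and>
     local_max_at P k1 \<and>
     strict_mono_on {..k1} P \<and> strict_antimono_on {k1..} P \<and>
     concave_on {..k2} P \<and> convex_on {k2..} P \<and>
     (\<forall>k>k0. P k > 0) \<and> (\<forall>k<k0. P k < 0) \<and>
     (P \<longlongrightarrow> 0) at_top \<and> (\<forall>\<^sub>F k in at_top. P k > 0) \<and>
     filterlim P at_bot at_bot"
proof -
  interpret high_exp_pair Cp "ln Tp" Cm "ln Tm"
    using assms by unfold_locales auto
  have P: "P = nth_deriv 0"
    using assms by (simp add: P_def fun_eq_iff pair_fun_def nth_deriv_def powr_def mult.commute)
  define k0 k1 k2
    where "k0 = nth_deriv_root 0" and "k1 = nth_deriv_root 1" and "k2 = nth_deriv_root 2"
  have sign: "P k > 0 \<longleftrightarrow> k0 < k" "P k < 0 \<longleftrightarrow> k < k0" for k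
    using alternating_nth_deriv_pos_iff[of 0 k] alternating_nth_deriv_neg_iff[of 0 k]
    by (simp_all add: P k0_def)
  have max: "local_max_at P k1"
    unfolding P k1_def using strict_mono_on_atMost_root_1 strict_antimono_on_atLeast_root_1
    by (intro local_max_at_if_mono_antimono)
      (simp_all add: strict_mono_on_imp_mono_on strict_antimono_iff_antimono)
  have "{k. local_extremum_at P k} = {k1}"
    using max eq_root_1_if_local_extremum_at by (auto simp: P k1_def local_extremum_at_def)
  moreover have "inflection_at P k2"
    unfolding inflection_at_def P k2_def
    using concave_on_atMost_root_2 convex_on_atLeast_root_2
    by (intro exI[of _ 1]) (auto elim!: convex_on_subset simp: concave_on_def)
  then have "{k. inflection_at P k} = {k2}"
    using not_inflection_at_nth_deriv_0 by (auto simp: P k2_def)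
  moreover have "k0 < k1" "k1 < k2"
    using nth_deriv_root_less_Suc[of 0] nth_deriv_root_less_Suc[of 1]
    by (simp_all add: k0_def k1_def k2_def numeral_2_eq_2)
  moreover have "\<forall>\<^sub>F k in at_top. P k > 0"
    using eventually_gt_at_top[of k0] by eventually_elim (simp add: sign)
  ultimately show ?thesis
    using sign max nth_deriv_eq_0_iff[of 0]
      strict_mono_on_atMost_root_1 strict_antimono_on_atLeast_root_1
      concave_on_atMost_root_2 convex_on_atLeast_root_2
      tendsto_nth_deriv_at_top filterlim_nth_deriv_0_at_bot
    by (intro exI[of _ k0] exI[of _ k1] exI[of _ k2]) (auto simp: P k0_def k1_def k2_def)
qed

lemma low_pair_fun_shape:
  fixes Cp Cm Tp Tm :: real
  assumes "Cp > 0" "Cm > 0" "0 < Tp" "Tp < Tm" "Tm < 1"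
  defines "P \<equiv> pair_fun Cp Tp Cm Tm"
  shows "\<exists>k0 k1 k2.
     {k. P k = 0} = {k0} \<and>
     {k. local_extremum_at P k} = {k1} \<and>
     {k. inflection_at P k} = {k2} \<and>
     k0 < k1 \<and> k1 < k2 \<and>
     local_min_at P k1 \<and>
     strict_antimono_on {..k1} P \<and> strict_mono_on {k1..} P \<and>
     convex_on {..k2} P \<and> concave_on {k2..} P \<and>
     (\<forall>k>k0. P k < 0) \<and>
     (P \<longlongrightarrow> 0) at_top \<and> (\<forall>\<^sub>F k in at_top. P k < 0) \<and>
     filterlim P at_top at_bot"
proof -
  define Q where "Q = pair_fun Cm Tm Cp Tp"
  have P: "P = (\<lambda>k. - Q k)"
    by (simp add: P_def Q_def pair_fun_def fun_eq_iff)
  obtain k0 k1 k2 where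
     "{k. Q k = 0} = {k0}" "{k. local_extremum_at Q k} = {k1}" "{k. inflection_at Q k} = {k2}"
     "k0 < k1" "k1 < k2" "local_max_at Q k1"
     "strict_mono_on {..k1} Q" "strict_antimono_on {k1..} Q"
     "concave_on {..k2} Q" "convex_on {k2..} Q" "\<forall>k>k0. Q k > 0"
     "(Q \<longlongrightarrow> 0) at_top" "\<forall>\<^sub>F k in at_top. Q k > 0" "filterlim Q at_bot at_bot"
    using high_pair_fun_shape[of Cm Cp Tp Tm] assms unfolding Q_def by blast
  then show ?thesis
    unfolding P
    by (intro exI[of _ k0] exI[of _ k1] exI[of _ k2])
      (auto simp: local_extremum_at_uminus_iff inflection_at_uminus_iff
        local_max_at_uminus_iff[symmetric] monotone_on_def concave_on_def filterlim_uminus_at_top tendsto_minus_cancel_left[symmetric])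
qed

theorem lemma1:
  fixes Cp Cm Tp Tm :: real
  assumes "Cp > 0" "Cm > 0" "0 < Tp" "Tp < 1" "0 < Tm" "Tm < 1" "Tp \<noteq> Tm"
  defines "P \<equiv> pair_fun Cp Tp Cm Tm"
  shows "\<exists>k0 k1 k2.
     {k. P k = 0} = {k0} \<and>
     {k. local_extremum_at P k} = {k1} \<and>
     {k. inflection_at P k} = {k2} \<and>
     k0 < k1 \<and> k1 < k2 \<and>
     (Tp > Tm \<longrightarrow>
        local_max_at P k1 \<and>
        strict_mono_on {..k1} P \<and> strict_antimono_on {k1..} P \<and>
        concave_on {..k2} P \<and> convex_on {k2..} P \<and>
        (\<forall>k>k0. P k > 0) \<and> (\<forall>k<k0. P k < 0) \<and>
        (P \<longlongrightarrow> 0) at_top \<and> (\<forall>\<^sub>F k in at_top. P k > 0) \<and>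
        filterlim P at_bot at_bot) \<and>
     (Tp < Tm \<longrightarrow>
        local_min_at P k1 \<and>
        strict_antimono_on {..k1} P \<and> strict_mono_on {k1..} P \<and>
        convex_on {..k2} P \<and> concave_on {k2..} P \<and>
        (\<forall>k>k0. P k < 0) \<and>
        (P \<longlongrightarrow> 0) at_top \<and> (\<forall>\<^sub>F k in at_top. P k < 0) \<and>
        filterlim P at_top at_bot) \<and>
     (\<forall>n\<ge>1. \<exists>!k. (deriv ^^ n) P k = 0)"
proof -
  have derivs: "\<forall>n\<ge>1. \<exists>!k. (deriv ^^ n) P k = 0"
    using pair_fun_funpow_deriv_unique_zero[OF assms(1-7)] by (simp add: P_def)
  show ?thesis
  proof (cases "Tm < Tp")
    case True
    then show ?thesis
      using high_pair_fun_shape[of Cp Cm Tm Tp] assms derivs unfolding P_def by auto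
  next
    case False
    then have "Tp < Tm"
      using assms(7) by simp
    then show ?thesis
      using low_pair_fun_shape[of Cp Cm Tp Tm] assms derivs unfolding P_def by auto
  qed
qed

end
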